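(* Let $S$ be the set of $27$ sextactic points of the Fermat cubic $F$ (see context), and let $\mathcal{L}$ be the set of lines in $\mathbb{P}^2_{\mathbb{C}}$ containing at least three points of $S$. These are exactly the lines occurring as components of reducible conics that contain six points of $S$. Then: <ul> <li>$|\mathcal{L}|=81$;</li> <li>each line of $\mathcal{L}$ contains exactly $3$ points of $S$;</li> <li>each point of $S$ lies on exactly $9$ lines of $\mathcal{L}$.</li> </ul> That is, $(\mathcal{L},S)$ is an $(81_3,27_9)$ configuration.
   Context: $F\subset\mathbb{P}^2_{\mathbb{C}}$ is the Fermat cubic $x^3+y^3+z^3=0$. The set of its sextactic points is $$S=\{[x:y:z]\in\mathbb{P}^2: x^3+y^3+z^3=0,\ (x^3-y^3)(y^3-z^3)(z^3-x^3)=0\}.$$ These are the $27$ points of $F$ at which the osculating conic has local contact order at least $6$ with $F$. *)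

theory Defs
  imports Complex_Main
begin

text \<open>Homogeneous coordinates: nonzero vectors in C^3. A point of the complex
projective plane is represented by the set of all scalar multiples of a nonzero
vector (the corresponding line through the origin in C^3).\<close>

type_synonym cvec = "complex \<times> complex \<times> complex"

definition ray :: "cvec \<Rightarrow> cvec set" where
  "ray v = (case v of (x, y, z) \<Rightarrow> {(c * x, c * y, c * z) | c. True})"

definition P2 :: "cvec set set" where
  "P2 = {ray v | v. v \<noteq> (0, 0, 0)}"

definition pline :: "cvec \<Rightarrow> cvec set set" where
  "pline l = (case l of (a, b, c) \<Rightarrow>
     {ray (x, y, z) | x y z. (x, y, z) \<noteq> (0, 0, 0) \<and> a * x + b * y + c * z = 0})"

definition plines :: "cvec set set set" where
  "plines = {pline l | l. l \<noteq> (0, 0, 0)}"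

definition sextactic_pts :: "cvec set set" where
  "sextactic_pts = {ray (x, y, z) | x y z. (x, y, z) \<noteq> (0, 0, 0) \<and>
      x ^ 3 + y ^ 3 + z ^ 3 = 0 \<and> (x ^ 3 - y ^ 3) * (y ^ 3 - z ^ 3) * (z ^ 3 - x ^ 3) = 0}"

definition rich_lines :: "cvec set set set" where
  "rich_lines = {L \<in> plines. card (L \<inter> sextactic_pts) \<ge> 3}"

end

theory Submission
  imports Defs "HOL-Library.Product_Lexorder"
begin

text \<open>
  Up to scaling, the sextactic points are the 27 vectors obtained from
  \<open>(1, \<omega>\<^sup>a, -\<root>3 2 \<omega>\<^sup>b)\<close>, \<open>a, b \<in> \<int>/3\<close>, by cyclically shifting the coordinates \<open>t \<in> \<int>/3\<close> times.
  Evaluating all 2925 determinants exactly in \<open>\<int>[\<omega>, \<root>3 2]\<close>, using that \<open>1, \<root>3 2, \<root>3 4\<close>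
  are linearly independent over \<open>\<rat>(\<omega>)\<close>, shows that three of them are collinear iff their
  indices \<open>(t, a, b)\<close> form a line of the affine space \<open>(\<int>/3)\<^sup>3\<close> along which the label \<open>a + b\<close>
  is not constant. These 81 "blocks" are easy to count: two indices lie in at most one block, the
  blocks through a point correspond to the 9 points of the next label class, double counting gives
  81 blocks, and only 27 blocks meet a given one, so every block has a disjoint partner. Lines with at
  least three sextactic points correspond bijectively to blocks.
\<close>

section \<open>Arithmetic in \<open>\<rat>(\<omega>, \<root>3 2)\<close>\<close>

definition omega :: complex where "omega = Complex (-1/2) (sqrt 3 / 2)"

definition cbrt2 :: complex where "cbrt2 = of_real (root 3 2)"

lemma omega_sq_plus_omega_plus_1: "omega^2 + omega + 1 = 0"
  unfolding omega_def by (simp add: power2_eq_square complex_eq_iff)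

lemma omega_cube: "omega^3 = 1"
proof -
  have "omega^3 - 1 = (omega - 1) * (omega^2 + omega + 1)" by algebra
  thus ?thesis using omega_sq_plus_omega_plus_1 by simp
qed

lemma omega_pow_mod: "omega ^ n = omega ^ (n mod 3)"
proof -
  have "omega ^ n = omega ^ (3 * (n div 3) + n mod 3)" by simp
  also have "\<dots> = (omega ^ 3) ^ (n div 3) * omega ^ (n mod 3)" by (simp only: power_add power_mult)
  finally show ?thesis by (simp add: omega_cube)
qed

lemma cbrt2_cube: "cbrt2^3 = 2"
  unfolding cbrt2_def by (simp flip: of_real_power)

lemma cbrt2_pow_div_mod: "cbrt2 ^ n = 2 ^ (n div 3) * cbrt2 ^ (n mod 3)"
proof -
  have "cbrt2 ^ n = cbrt2 ^ (3 * (n div 3) + n mod 3)" by simp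
  also have "\<dots> = (cbrt2 ^ 3) ^ (n div 3) * cbrt2 ^ (n mod 3)" by (simp only: power_add power_mult)
  finally show ?thesis by (simp add: cbrt2_cube)
qed

lemma cube_root_of_unity:
  assumes "w^3 = 1" shows "\<exists>a<3. w = omega ^ a"
proof -
  have "(w - 1) * (w - omega) * (w - omega^2)
      = w^3 - (omega^2 + omega + 1) * w^2 + (omega^2 + omega + 1) * omega * w - omega^3"
    by algebra
  also have "\<dots> = 0" using assms omega_sq_plus_omega_plus_1 omega_cube by simp
  finally consider "w = omega^0" | "w = omega^1" | "w = omega^2" by auto
  thus ?thesis by cases (auto intro: exI[of _ "0::nat"] exI[of _ "1::nat"] exI[of _ "2::nat"])
qed

text \<open>Infinite descent: every coordinate of a zero of the norm form of \<open>\<int>[\<root>3 2]\<close> is even.\<close>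
lemma norm_form_zero:
  fixes p q r :: int
  shows "p^3 + 2*q^3 + 4*r^3 = 6*p*q*r \<Longrightarrow> p = 0 \<and> q = 0 \<and> r = 0"
proof (induction "nat (\<bar>p\<bar> + \<bar>q\<bar> + \<bar>r\<bar>)" arbitrary: p q r rule: less_induct)
  case less
  have "p^3 = 2*(3*p*q*r - q^3 - 2*r^3)" using less.prems by algebra
  hence "even p" by (metis dvd_triv_left even_power)
  then obtain p' where p: "p = 2*p'" by (auto elim: evenE)
  have eq: "q^3 + 2*r^3 + 4*p'^3 = 6*q*r*p'" using less.prems unfolding p by algebra
  have "q^3 = 2*(3*q*r*p' - r^3 - 2*p'^3)" using eq by algebra
  hence "even q" by (metis dvd_triv_left even_power)
  then obtain q' where q: "q = 2*q'" by (auto elim: evenE)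
  have eq': "r^3 + 2*p'^3 + 4*q'^3 = 6*r*p'*q'" using eq unfolding q by algebra
  have "r^3 = 2*(3*r*p'*q' - p'^3 - 2*q'^3)" using eq' by algebra
  hence "even r" by (metis dvd_triv_left even_power)
  then obtain r' where r: "r = 2*r'" by (auto elim: evenE)
  have smaller: "p'^3 + 2*q'^3 + 4*r'^3 = 6*p'*q'*r'" using eq' unfolding r by algebra
  show ?case
  proof (rule ccontr)
    assume nonzero: "\<not> (p = 0 \<and> q = 0 \<and> r = 0)"
    hence "nat (\<bar>p'\<bar> + \<bar>q'\<bar> + \<bar>r'\<bar>) < nat (\<bar>p\<bar> + \<bar>q\<bar> + \<bar>r\<bar>)"
      unfolding p q r by auto
    from less.hyps[OF this smaller] nonzero show False using p q r by simp
  qed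
qed

lemma root3_2_linear_independent:
  fixes p q r :: int
  assumes "of_int p + of_int q * root 3 2 + of_int r * root 3 2 ^ 2 = (0::real)"
  shows "p = 0 \<and> q = 0 \<and> r = 0"
proof -
  define x where "x = root 3 (2::real)"
  have x3: "x^3 = 2" unfolding x_def by (simp add: real_root_pow_pos2)
  define P Q R where "P = real_of_int p" and "Q = real_of_int q" and "R = real_of_int r"
  have "P^3 + 2*Q^3 + 4*R^3 - 6*P*Q*R
      = (P + Q*x + R*x^2) * (P^2 - 2*Q*R + (2*R^2 - P*Q)*x + (Q^2 - P*R)*x^2)
        - (x^3 - 2) * ((Q^3 + 2*R^3 - 2*P*Q*R) + x*(R*Q^2 - P*R^2))"
    by algebra
  also have "\<dots> = 0" using assms x3 by (simp add: x_def P_def Q_def R_def)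
  finally have "real_of_int (p^3 + 2*q^3 + 4*r^3) = real_of_int (6*p*q*r)"
    by (simp add: P_def Q_def R_def)
  thus ?thesis using norm_form_zero of_int_eq_iff by blast
qed

lemma omega_real_linear_independent:
  assumes "complex_of_real x + omega * complex_of_real y = 0"
  shows "x = 0 \<and> y = 0"
proof -
  have "Im (complex_of_real x + omega * complex_of_real y) = sqrt 3 / 2 * y"
    by (simp add: omega_def)
  thus ?thesis using assms by simp
qed

lemma sum_lessThan_3: "(\<Sum>i<3. f i) = f 0 + f 1 + f (2::nat)"
  by (simp add: eval_nat_numeral)

lemma all_less_3: "(\<forall>s<3. P s) \<longleftrightarrow> P 0 \<and> P 1 \<and> P (2::nat)"
  by (auto simp: less_Suc_eq eval_nat_numeral)

lemma integral_combination_eq_0_iff: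
  fixes A :: "nat \<Rightarrow> nat \<Rightarrow> int"
  shows "(\<Sum>r<3. \<Sum>s<3. of_int (A r s) * omega^r * cbrt2^s) = 0
     \<longleftrightarrow> (\<forall>s<3. A 0 s = A 2 s \<and> A 1 s = A 2 s)"
proof -
  define x where "x = root 3 (2::real)"
  define X where "X = of_int (A 0 0 - A 2 0) + of_int (A 0 1 - A 2 1) * x + of_int (A 0 2 - A 2 2) * x^2"
  define Y where "Y = of_int (A 1 0 - A 2 0) + of_int (A 1 1 - A 2 1) * x + of_int (A 1 2 - A 2 2) * x^2"
  have "(\<Sum>r<3. \<Sum>s<3. of_int (A r s) * omega^r * cbrt2^s)
      = of_real X + omega * of_real Y + (omega^2 + omega + 1) * (\<Sum>s<3. of_int (A 2 s) * cbrt2^s)"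
    by (simp add: sum_lessThan_3 X_def Y_def x_def cbrt2_def algebra_simps)
  hence "(\<Sum>r<3. \<Sum>s<3. of_int (A r s) * omega^r * cbrt2^s) = of_real X + omega * of_real Y"
    by (simp add: omega_sq_plus_omega_plus_1)
  moreover have "X = 0 \<longleftrightarrow> A 0 0 = A 2 0 \<and> A 0 1 = A 2 1 \<and> A 0 2 = A 2 2"
    using root3_2_linear_independent unfolding X_def x_def by fastforce
  moreover have "Y = 0 \<longleftrightarrow> A 1 0 = A 2 0 \<and> A 1 1 = A 2 1 \<and> A 1 2 = A 2 2"
    using root3_2_linear_independent unfolding Y_def x_def by fastforce
  ultimately show ?thesis using omega_real_linear_independent by (auto simp: all_less_3)
qed

section \<open>Exact evaluation of sums of monomials\<close>

type_synonym monomial = "int \<times> nat \<times> nat"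

fun mono_val :: "monomial \<Rightarrow> complex" where
  "mono_val (k, e, j) = of_int k * omega ^ e * cbrt2 ^ j"

fun mono_coeff :: "monomial \<Rightarrow> nat \<Rightarrow> nat \<Rightarrow> int" where
  "mono_coeff (k, e, j) r s = (if s = j mod 3 then if r = e mod 3 then k * 2 ^ (j div 3) else 0 else 0)"

lemma mono_val_expand:
  "mono_val m = (\<Sum>r<3. \<Sum>s<3. of_int (mono_coeff m r s) * omega^r * cbrt2^s)"
proof -
  obtain k e j where m: "m = (k, e, j)" by (cases m)
  have "mono_val m = of_int (k * 2 ^ (j div 3)) * omega ^ (e mod 3) * cbrt2 ^ (j mod 3)"
    unfolding m by (simp add: omega_pow_mod[of e] cbrt2_pow_div_mod[of j])
  thus ?thesis
    unfolding m by (simp add: if_distrib[of of_int] if_distrib[where f="\<lambda>x. x * _"] cong: if_cong)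
qed

definition sum_coeff :: "monomial list \<Rightarrow> nat \<Rightarrow> nat \<Rightarrow> int" where
  "sum_coeff ms r s = (\<Sum>m\<leftarrow>ms. mono_coeff m r s)"

text \<open>
  Since \<open>1, \<root>3 2, \<root>3 4\<close> are linearly independent over \<open>\<rat>(\<omega>)\<close> and \<open>1 + \<omega> + \<omega>\<^sup>2 = 0\<close> is the only
  relation between the powers of \<open>\<omega>\<close>, a sum of monomials vanishes iff, for each power of \<open>\<root>3 2\<close>,
  its three \<open>\<omega>\<close>-coefficients agree.
\<close>
definition vanishes :: "monomial list \<Rightarrow> bool" where
  "vanishes ms \<longleftrightarrow> (\<forall>s\<in>{0, 1, 2}. sum_coeff ms 0 s = sum_coeff ms 2 s \<and> sum_coeff ms 1 s = sum_coeff ms 2 s)"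

lemma vanishes_iff: "vanishes ms \<longleftrightarrow> (\<Sum>m\<leftarrow>ms. mono_val m) = 0"
proof -
  have "(\<Sum>m\<leftarrow>ms. mono_val m) = (\<Sum>r<3. \<Sum>s<3. of_int (sum_coeff ms r s) * omega^r * cbrt2^s)"
    by (induction ms) (simp_all add: sum_coeff_def mono_val_expand sum.distrib algebra_simps)
  thus ?thesis by (simp add: vanishes_def integral_combination_eq_0_iff all_less_3)
qed

fun mono_mult :: "monomial \<Rightarrow> monomial \<Rightarrow> monomial" where
  "mono_mult (k, e, j) (k', e', j') = (k * k', e + e', j + j')"

fun mono_neg :: "monomial \<Rightarrow> monomial" where
  "mono_neg (k, e, j) = (- k, e, j)"

lemma mono_val_mult: "mono_val (mono_mult m m') = mono_val m * mono_val m'"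
  by (cases m; cases m') (simp add: power_add)

lemma mono_val_neg: "mono_val (mono_neg m) = - mono_val m"
  by (cases m) simp

fun det3 :: "'a::comm_ring \<times> 'a \<times> 'a \<Rightarrow> 'a \<times> 'a \<times> 'a \<Rightarrow> 'a \<times> 'a \<times> 'a \<Rightarrow> 'a" where
  "det3 (a, b, c) (d, e, f) (g, h, i) = a*e*i - a*f*h + b*f*g - b*d*i + c*d*h - c*e*g"

fun mono_det3 :: "monomial \<times> monomial \<times> monomial \<Rightarrow> monomial \<times> monomial \<times> monomial
    \<Rightarrow> monomial \<times> monomial \<times> monomial \<Rightarrow> monomial list" where
  "mono_det3 (a, b, c) (d, e, f) (g, h, i) =
     (let m = \<lambda>x y z. mono_mult x (mono_mult y z)
      in [m a e i, mono_neg (m a f h), m b f g, mono_neg (m b d i), m c d h, mono_neg (m c e g)])"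

definition map3 :: "('a \<Rightarrow> 'b) \<Rightarrow> 'a \<times> 'a \<times> 'a \<Rightarrow> 'b \<times> 'b \<times> 'b" where
  "map3 f = map_prod f (map_prod f f)"

lemma sum_mono_det3:
  "(\<Sum>m\<leftarrow>mono_det3 u v w. mono_val m) = det3 (map3 mono_val u) (map3 mono_val v) (map3 mono_val w)"
  by (cases u; cases v; cases w) (simp add: map3_def mono_val_mult mono_val_neg algebra_simps)

lemma det3_swap12: "det3 v u w = - det3 u v w"
  by (cases u; cases v; cases w) (simp add: algebra_simps)

lemma det3_swap23: "det3 u w v = - det3 u v w"
  by (cases u; cases v; cases w) (simp add: algebra_simps)

section \<open>The sextactic points\<close>

fun rot :: "'a \<times> 'a \<times> 'a \<Rightarrow> 'a \<times> 'a \<times> 'a" where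
  "rot (x, y, z) = (z, x, y)"

type_synonym idx = "nat \<times> nat \<times> nat"

fun sext_vec :: "idx \<Rightarrow> complex \<times> complex \<times> complex" where
  "sext_vec (t, a, b) = (rot ^^ t) (1, omega ^ a, - cbrt2 * omega ^ b)"

abbreviation sext_point :: "idx \<Rightarrow> cvec set" where
  "sext_point i \<equiv> ray (sext_vec i)"

fun mono_vec :: "idx \<Rightarrow> monomial \<times> monomial \<times> monomial" where
  "mono_vec (t, a, b) = (rot ^^ t) ((1, 0, 0), (1, a, 0), (-1, b, 1))"

lemma map3_rot: "map3 f (rot v) = rot (map3 f v)"
  by (cases v) (simp add: map3_def)

lemma map3_rot_funpow: "map3 f ((rot ^^ n) v) = (rot ^^ n) (map3 f v)"
  by (induction n) (simp_all add: map3_rot)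

lemma sext_vec_eq_mono_vec: "sext_vec i = map3 mono_val (mono_vec i)"
  by (cases i) (simp only: sext_vec.simps mono_vec.simps map3_rot_funpow, simp add: map3_def mult.commute)

definition grid :: "idx set" where "grid = {..<3} \<times> {..<3} \<times> {..<3}"

lemma lessThan_3: "{..<3::nat} = {0, 1, 2}"
  by (auto simp: numeral_3_eq_3 less_Suc_eq)

lemma grid_code: "grid = set (List.product [0, 1, 2] (List.product [0, 1, 2] [0, 1, 2]))"
  by (simp add: grid_def lessThan_3)

lemma finite_grid: "finite grid"
  by (simp add: grid_def)

lemma card_grid: "card grid = 27"
  by (simp add: grid_def card_cartesian_product)

fun scale3 :: "complex \<Rightarrow> cvec \<Rightarrow> cvec" where
  "scale3 k (x, y, z) = (k * x, k * y, k * z)"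

lemma ray_eq_range: "ray v = range (\<lambda>k. scale3 k v)"
  by (cases v) (auto simp: ray_def)

lemma scale3_scale3: "scale3 k (scale3 k' v) = scale3 (k * k') v"
  by (cases v) simp

lemma scale3_1: "scale3 1 v = v"
  by (cases v) simp

lemma in_ray_self: "v \<in> ray v"
  unfolding ray_eq_range by (metis rangeI scale3_1)

lemma ray_scale3: "k \<noteq> 0 \<Longrightarrow> ray (scale3 k v) = ray v"
  unfolding ray_eq_range by (auto simp: scale3_scale3 image_iff intro!: exI[of _ "_ / k"])

lemma ray_eq_imp_scale3: "ray v = ray w \<Longrightarrow> \<exists>k. w = scale3 k v"
  using in_ray_self[of w] unfolding ray_eq_range by auto

lemma rot_funpow_nonzero: "v \<noteq> (0, 0, 0) \<Longrightarrow> (rot ^^ n) v \<noteq> (0, 0, 0)"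
  by (induction n arbitrary: v) (auto elim: rot.elims)

lemma sext_vec_nonzero: "sext_vec i \<noteq> (0, 0, 0)"
  by (cases i) (simp add: rot_funpow_nonzero)

fun on_sextactic_locus :: "cvec \<Rightarrow> bool" where
  "on_sextactic_locus (x, y, z) \<longleftrightarrow>
     x^3 + y^3 + z^3 = 0 \<and> (x^3 - y^3) * (y^3 - z^3) * (z^3 - x^3) = 0"

lemma sextactic_pts_locus: "sextactic_pts = {ray v | v. v \<noteq> (0, 0, 0) \<and> on_sextactic_locus v}"
  unfolding sextactic_pts_def by fastforce

lemma on_sextactic_locus_rot: "on_sextactic_locus (rot v) = on_sextactic_locus v"
  by (cases v) (auto simp: algebra_simps)

lemma on_sextactic_locus_sext_vec: "on_sextactic_locus (sext_vec i)"
proof -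
  obtain t a b where i: "i = (t, a, b)" by (cases i)
  have cube: "(omega ^ n) ^ 3 = 1" for n
    by (metis omega_cube power_mult mult.commute power_one)
  hence "on_sextactic_locus (1, omega ^ a, - cbrt2 * omega ^ b)"
    by (simp add: power_mult_distrib cbrt2_cube cube)
  thus ?thesis unfolding i
    by (induction t) (simp_all add: on_sextactic_locus_rot del: on_sextactic_locus.simps)
qed

lemma sextactic_normal_form:
  assumes "x^3 + y^3 + z^3 = 0" "x^3 = y^3" "(x, y, z) \<noteq> (0, 0, 0)"
  shows "\<exists>a<3. \<exists>b<3. x \<noteq> 0 \<and> (x, y, z) = scale3 x (sext_vec (0, a, b))"
proof -
  have z: "z^3 = -2 * x^3" using assms(1,2) by (simp add: algebra_simps eq_neg_iff_add_eq_0)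
  have "x \<noteq> 0" using assms(2,3) z by auto
  have "(y / x)^3 = 1" using assms(2)[symmetric] \<open>x \<noteq> 0\<close> by (simp add: power_divide)
  then obtain a where a: "a < 3" "y / x = omega ^ a" using cube_root_of_unity by blast
  have "(z / (- cbrt2 * x))^3 = 1"
    using z \<open>x \<noteq> 0\<close> by (simp add: power_divide power_mult_distrib cbrt2_cube)
  then obtain b where b: "b < 3" "z / (- cbrt2 * x) = omega ^ b" using cube_root_of_unity by blast
  have "cbrt2 \<noteq> 0" using cbrt2_cube by auto
  hence "(x, y, z) = scale3 x (sext_vec (0, a, b))"
    using a(2) b(2) \<open>x \<noteq> 0\<close> by (simp add: field_simps) (metis minus_minus)
  thus ?thesis using a(1) b(1) \<open>x \<noteq> 0\<close> by blast
qed

lemma on_sextactic_locus_normal_form: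
  assumes "on_sextactic_locus v" "v \<noteq> (0, 0, 0)"
  shows "\<exists>i\<in>grid. \<exists>k. k \<noteq> 0 \<and> v = scale3 k (sext_vec i)"
proof -
  obtain x y z where v: "v = (x, y, z)" by (cases v)
  have F: "x^3 + y^3 + z^3 = 0" and "x^3 = y^3 \<or> y^3 = z^3 \<or> z^3 = x^3"
    using assms(1) v by auto
  then consider "x^3 = y^3" | "y^3 = z^3" | "z^3 = x^3" by blast
  thus ?thesis
  proof cases
    case 1
    then obtain a b where "a < 3" "b < 3" "x \<noteq> 0" "v = scale3 x (sext_vec (0, a, b))"
      using sextactic_normal_form[OF F 1] assms(2) v by blast
    thus ?thesis by (intro bexI[of _ "(0, a, b)"]) (auto simp: grid_def)
  next
    case 2
    have "y^3 + z^3 + x^3 = 0" "(y, z, x) \<noteq> (0, 0, 0)" using F assms(2) v by (auto simp: algebra_simps)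
    then obtain a b where "a < 3" "b < 3" "y \<noteq> 0" "(y, z, x) = scale3 y (sext_vec (0, a, b))"
      using sextactic_normal_form 2 by blast
    moreover from this have "v = scale3 y (sext_vec (1, a, b))" by (simp add: v)
    ultimately show ?thesis by (intro bexI[of _ "(1, a, b)"]) (auto simp: grid_def)
  next
    case 3
    have "z^3 + x^3 + y^3 = 0" "(z, x, y) \<noteq> (0, 0, 0)" using F assms(2) v by (auto simp: algebra_simps)
    then obtain a b where "a < 3" "b < 3" "z \<noteq> 0" "(z, x, y) = scale3 z (sext_vec (0, a, b))"
      using sextactic_normal_form 3 by blast
    moreover from this have "v = scale3 z (sext_vec (2, a, b))" by (simp add: v numeral_2_eq_2)
    ultimately show ?thesis by (intro bexI[of _ "(2, a, b)"]) (auto simp: grid_def)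
  qed
qed

lemma sextactic_pts_eq: "sextactic_pts = sext_point ` grid"
proof
  show "sext_point ` grid \<subseteq> sextactic_pts"
    unfolding sextactic_pts_locus using sext_vec_nonzero on_sextactic_locus_sext_vec by blast
  show "sextactic_pts \<subseteq> sext_point ` grid"
  proof
    fix p assume "p \<in> sextactic_pts"
    then obtain v where p: "p = ray v" "v \<noteq> (0, 0, 0)" "on_sextactic_locus v"
      unfolding sextactic_pts_locus by blast
    then obtain i k where "i \<in> grid" "k \<noteq> 0" "v = scale3 k (sext_vec i)"
      using on_sextactic_locus_normal_form by blast
    thus "p \<in> sext_point ` grid" using p(1) ray_scale3 by auto
  qed
qed

section \<open>Collinear triples of sextactic points\<close>

fun label :: "idx \<Rightarrow> nat" where "label (t, a, b) = (a + b) mod 3"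

text \<open>
  In \<open>\<int>/3\<close>, \<open>i, j, k\<close> are aligned iff they form an affine line of \<open>(\<int>/3)\<^sup>3\<close> (coordinatewise sum \<open>0\<close>)
  along which the label \<open>a + b\<close> is not constant.
\<close>
fun aligned :: "idx \<Rightarrow> idx \<Rightarrow> idx \<Rightarrow> bool" where
  "aligned (t, a, b) (t', a', b') (t'', a'', b'') \<longleftrightarrow>
     (t + t' + t'') mod 3 = 0 \<and> (a + a' + a'') mod 3 = 0 \<and> (b + b' + b'') mod 3 = 0 \<and>
     distinct [label (t, a, b), label (t', a', b'), label (t'', a'', b'')]"

lemma aligned_swap12: "aligned j i k = aligned i j k"
  by (cases i; cases j; cases k) (auto simp: add_ac)

lemma aligned_swap23: "aligned i k j = aligned i j k"
  by (cases i; cases j; cases k) (auto simp: add_ac)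

definition all_increasing_triples :: "('a::linorder \<Rightarrow> 'a \<Rightarrow> 'a \<Rightarrow> bool) \<Rightarrow> 'a list \<Rightarrow> bool" where
  "all_increasing_triples P xs \<longleftrightarrow>
     (\<forall>i\<in>set xs. \<forall>j\<in>set xs. \<forall>k\<in>set xs. i < j \<longrightarrow> j < k \<longrightarrow> P i j k)"

text \<open>The guards are \<open>if\<close>s so that evaluation never visits a non-increasing triple.\<close>
lemma all_increasing_triples_code [code]:
  "all_increasing_triples P xs =
     list_all (\<lambda>i. list_all (\<lambda>j. if i < j then list_all (\<lambda>k. if j < k then P i j k else True) xs
       else True) xs) xs"
  by (auto simp: all_increasing_triples_def list_all_iff)

lemma all_increasing_triples_mono:
  "all_increasing_triples P xs \<Longrightarrow> (\<And>i j k. P i j k \<Longrightarrow> Q i j k) \<Longrightarrow> all_increasing_triples Q xs"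
  unfolding all_increasing_triples_def by blast

lemma all_increasing_triples_distinct:
  assumes "all_increasing_triples P xs"
    and swap12: "\<And>i j k. P i j k \<Longrightarrow> P j i k" and swap23: "\<And>i j k. P i j k \<Longrightarrow> P i k j"
    and "i \<in> set xs" "j \<in> set xs" "k \<in> set xs" "distinct [i, j, k]"
  shows "P i j k"
proof -
  have sorted: "P x y z" if "x \<in> {i, j, k}" "y \<in> {i, j, k}" "z \<in> {i, j, k}" "x < y" "y < z" for x y z
    using assms(1,4-6) that unfolding all_increasing_triples_def by blast
  have "i < j \<or> j < i" "i < k \<or> k < i" "j < k \<or> k < j" using assms(7) by auto
  thus ?thesis using sorted swap12 swap23 by (metis insertCI)
qed

lemma vanishes_mono_det3_increasing:
  "all_increasing_triples
     (\<lambda>i j k. vanishes (mono_det3 (mono_vec i) (mono_vec j) (mono_vec k)) = aligned i j k)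
     (List.product [0, 1, 2] (List.product [0, 1, 2] [0, 1, 2]))"
  by code_simp

lemma det3_sext_vec_eq_0_iff:
  assumes "i \<in> grid" "j \<in> grid" "k \<in> grid" "distinct [i, j, k]"
  shows "det3 (sext_vec i) (sext_vec j) (sext_vec k) = 0 \<longleftrightarrow> aligned i j k"
proof -
  let ?Q = "\<lambda>i j k. det3 (sext_vec i) (sext_vec j) (sext_vec k) = 0 \<longleftrightarrow> aligned i j k"
  have "all_increasing_triples ?Q (List.product [0, 1, 2] (List.product [0, 1, 2] [0, 1, 2]))"
    by (rule all_increasing_triples_mono[OF vanishes_mono_det3_increasing])
      (simp add: vanishes_iff sum_mono_det3 sext_vec_eq_mono_vec)
  moreover have "?Q j i k" if "?Q i j k" for i j k
    using that by (metis det3_swap12 aligned_swap12 neg_equal_0_iff_equal)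
  moreover have "?Q i k j" if "?Q i j k" for i j k
    using that by (metis det3_swap23 aligned_swap23 neg_equal_0_iff_equal)
  ultimately show ?thesis
    using all_increasing_triples_distinct assms unfolding grid_code by blast
qed

section \<open>Blocks\<close>

lemma mod3_unique: "(s + y) mod 3 = 0 \<Longrightarrow> (s + z) mod 3 = 0 \<Longrightarrow> y < 3 \<Longrightarrow> z < (3::nat) \<Longrightarrow> y = z"
  by presburger

lemma mod3_third: "(s + s' + (2 * s + 2 * s') mod 3) mod 3 = (0::nat)"
  by presburger

lemma mod3_third_distinct:
  assumes "u < 3" "v < 3" "u \<noteq> v" shows "distinct [u, v, (2 * (u + v)) mod (3::nat)]"
proof -
  have "u \<in> {0, 1, 2}" "v \<in> {0, 1, 2}" using assms(1,2) by auto
  thus ?thesis using assms(3) by auto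
qed

lemma mod3_solve: "a < 3 \<Longrightarrow> b < 3 \<Longrightarrow> (a + b) mod 3 = c \<Longrightarrow> b = (c + 2 * a) mod (3::nat)"
proof -
  assume "b < 3" "(a + b) mod 3 = c"
  hence "(c + 2 * a) mod 3 = ((a + b) mod 3 + 2 * a) mod 3" by simp
  also have "\<dots> = (a + b + 2 * a) mod 3" by (rule mod_add_left_eq)
  also have "\<dots> = (b + 3 * a) mod 3" by (simp add: algebra_simps)
  finally show ?thesis using \<open>b < 3\<close> by simp
qed

lemma mod3_solve_correct: "c < 3 \<Longrightarrow> (a + (c + 2 * a) mod 3) mod 3 = (c::nat)"
proof -
  assume "c < 3"
  have "(a + (c + 2 * a) mod 3) mod 3 = (c + 3 * a) mod 3" by (simp add: mod_add_right_eq algebra_simps)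
  thus ?thesis using \<open>c < 3\<close> by simp
qed

text \<open>The third point of the aligned triple through \<open>i\<close> and \<open>j\<close> is \<open>-(i + j)\<close> in \<open>(\<int>/3)\<^sup>3\<close>.\<close>
fun third :: "idx \<Rightarrow> idx \<Rightarrow> idx" where
  "third (t, a, b) (t', a', b') = ((2 * (t + t')) mod 3, (2 * (a + a')) mod 3, (2 * (b + b')) mod 3)"

lemma label_less_3: "label i < 3"
  by (cases i) simp

lemma label_third: "label (third i j) = (2 * (label i + label j)) mod 3"
proof -
  obtain t a b t' a' b' where ij: "i = (t, a, b)" "j = (t', a', b')" by (cases i, cases j)
  have "((2 * (a + a')) mod 3 + (2 * (b + b')) mod 3) mod 3 = (2 * ((a + b) + (a' + b'))) mod 3"
    by (simp add: mod_add_eq algebra_simps)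
  also have "\<dots> = (2 * ((a + b) mod 3 + (a' + b') mod 3)) mod 3"
    by (metis mod_add_eq mod_mult_right_eq)
  finally show ?thesis by (simp only: ij third.simps label.simps)
qed

lemma aligned_distinct: "aligned i j k \<Longrightarrow> distinct [i, j, k]"
  by (cases i; cases j; cases k) auto

lemma aligned_labels: "aligned i j k \<Longrightarrow> distinct [label i, label j, label k]"
  by (cases i; cases j; cases k) auto

lemma aligned_unique:
  assumes "k \<in> grid" "k' \<in> grid" "aligned i j k" "aligned i j k'"
  shows "k = k'"
proof -
  obtain t a b t' a' b' where ij: "i = (t, a, b)" "j = (t', a', b')" by (cases i, cases j)
  obtain u c d u' c' d' where kk: "k = (u, c, d)" "k' = (u', c', d')" by (cases k, cases k')
  show ?thesis
    using assms mod3_unique[of "t + t'" u u'] mod3_unique[of "a + a'" c c'] mod3_unique[of "b + b'" d d']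
    unfolding ij kk grid_def by simp
qed

lemma aligned_third:
  assumes "i \<in> grid" "j \<in> grid" "label i \<noteq> label j"
  shows "third i j \<in> grid \<and> aligned i j (third i j)"
proof -
  obtain t a b t' a' b' where ij: "i = (t, a, b)" "j = (t', a', b')" by (cases i, cases j)
  have "distinct [label i, label j, label (third i j)]"
    unfolding label_third using mod3_third_distinct label_less_3 assms(3) by blast
  thus ?thesis by (simp add: ij grid_def mod3_third)
qed

lemma aligned_permute:
  assumes "aligned x y z" "i \<in> {x, y, z}" "j \<in> {x, y, z}" "i \<noteq> j"
  shows "\<exists>w. {x, y, z} = {i, j, w} \<and> aligned i j w"
proof -
  have "aligned y x z" "aligned x z y" "aligned z x y" "aligned y z x" "aligned z y x"
    using assms(1) aligned_swap12 aligned_swap23 by metis+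
  moreover from assms(2-4) consider "i = x" "j = y" | "i = y" "j = x" | "i = x" "j = z"
    | "i = z" "j = x" | "i = y" "j = z" | "i = z" "j = y" by blast
  ultimately show ?thesis using assms(1) by (cases; blast)
qed

definition blocks :: "idx set set" where
  "blocks = {{i, j, k} | i j k. i \<in> grid \<and> j \<in> grid \<and> k \<in> grid \<and> aligned i j k}"

lemma aligned_in_blocks:
  "i \<in> grid \<Longrightarrow> j \<in> grid \<Longrightarrow> k \<in> grid \<Longrightarrow> aligned i j k \<Longrightarrow> {i, j, k} \<in> blocks"
  unfolding blocks_def by blast

lemma block_subset_card: "b \<in> blocks \<Longrightarrow> b \<subseteq> grid \<and> card b = 3"
proof -
  assume "b \<in> blocks"
  then obtain i j k where "b = {i, j, k}" "i \<in> grid" "j \<in> grid" "k \<in> grid" "aligned i j k"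
    unfolding blocks_def by blast
  thus ?thesis using aligned_distinct[of i j k] by simp
qed

lemma finite_blocks: "finite blocks"
  using block_subset_card finite_grid by (meson PowI finite_Pow_iff finite_subset subsetI)

lemma card_label_class:
  assumes "c < 3" shows "card {j \<in> grid. label j = c} = 9"
proof -
  have "{j \<in> grid. label j = c} = (\<lambda>(t, a). (t, a, (c + 2 * a) mod 3)) ` ({..<3::nat} \<times> {..<3::nat})"
  proof (intro equalityI subsetI)
    fix j assume "j \<in> {j \<in> grid. label j = c}"
    then obtain t a b where "j = (t, a, b)" "t < 3" "a < 3" "b < 3" "(a + b) mod 3 = c"
      unfolding grid_def by auto
    moreover from this have "b = (c + 2 * a) mod 3" by (simp add: mod3_solve)
    ultimately show "j \<in> (\<lambda>(t, a). (t, a, (c + 2 * a) mod 3)) ` ({..<3::nat} \<times> {..<3::nat})"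
      by (auto intro!: image_eqI[where x = "(t, a)"])
  next
    fix j assume "j \<in> (\<lambda>(t, a). (t, a, (c + 2 * a) mod 3)) ` ({..<3::nat} \<times> {..<3::nat})"
    then obtain t a where "j = (t, a, (c + 2 * a) mod 3)" "t < 3" "a < 3" by auto
    moreover have "(a + (c + 2 * a) mod 3) mod 3 = c" using assms by (rule mod3_solve_correct)
    ultimately show "j \<in> {j \<in> grid. label j = c}" unfolding grid_def by simp
  qed
  moreover have "inj_on (\<lambda>(t, a). (t, a, (c + 2 * a) mod 3)) ({..<3::nat} \<times> {..<3::nat})"
    by (auto simp: inj_on_def)
  ultimately show ?thesis by (simp add: card_image card_cartesian_product)
qed

lemma block_determined_by_two_points:
  assumes "b \<in> blocks" "i \<in> b" "j \<in> b" "i \<noteq> j"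
  shows "b = {i, j, third i j}"
proof -
  obtain x y z where b: "b = {x, y, z}" "x \<in> grid" "y \<in> grid" "z \<in> grid" "aligned x y z"
    using assms(1) unfolding blocks_def by blast
  then obtain w where w: "b = {i, j, w}" "aligned i j w"
    using aligned_permute assms(2-4) by blast
  have "i \<in> grid" "j \<in> grid" "w \<in> grid" using b w by auto
  moreover have "label i \<noteq> label j" using aligned_labels[OF w(2)] by simp
  ultimately have "w = third i j" using aligned_third aligned_unique w(2) by blast
  thus ?thesis using w(1) by simp
qed

lemma block_meets_label_class:
  assumes "b \<in> blocks" "c < 3" shows "\<exists>j\<in>b. label j = c"
proof -
  obtain x y z where b: "b = {x, y, z}" "aligned x y z"
    using assms(1) unfolding blocks_def by blast
  have "distinct [label x, label y, label z]" using aligned_labels[OF b(2)] .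
  hence "c = label x \<or> c = label y \<or> c = label z"
    using assms(2) label_less_3[of x] label_less_3[of y] label_less_3[of z] by auto
  thus ?thesis using b(1) by blast
qed

text \<open>A block through \<open>i\<close> meets every other label class in exactly one point.\<close>
lemma bij_betw_label_class_blocks_through:
  assumes "i \<in> grid" "c < 3" "c \<noteq> label i"
  shows "bij_betw (\<lambda>j. {i, j, third i j}) {j \<in> grid. label j = c} {b \<in> blocks. i \<in> b}"
proof (rule bij_betw_imageI)
  have aligned_third_i: "third i j \<in> grid \<and> aligned i j (third i j)" if "j \<in> grid" "label j = c" for j
    using aligned_third assms that by auto
  show "inj_on (\<lambda>j. {i, j, third i j}) {j \<in> grid. label j = c}"
  proof (rule inj_onI)
    fix j j' assume j: "j \<in> {j \<in> grid. label j = c}" and j': "j' \<in> {j \<in> grid. label j = c}"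
      and "{i, j, third i j} = {i, j', third i j'}"
    hence "j' \<in> {i, j, third i j}" by blast
    moreover have "label (third i j) \<noteq> c"
      using aligned_labels[of i j "third i j"] aligned_third_i[of j] j by auto
    ultimately show "j = j'" using j' assms(3) by auto
  qed
  show "(\<lambda>j. {i, j, third i j}) ` {j \<in> grid. label j = c} = {b \<in> blocks. i \<in> b}"
  proof (intro equalityI subsetI)
    fix b assume "b \<in> (\<lambda>j. {i, j, third i j}) ` {j \<in> grid. label j = c}"
    then obtain j where "j \<in> grid" "label j = c" "b = {i, j, third i j}" by blast
    thus "b \<in> {b \<in> blocks. i \<in> b}" using aligned_third_i aligned_in_blocks assms(1) by auto
  next
    fix b assume b: "b \<in> {b \<in> blocks. i \<in> b}"
    then obtain j where "j \<in> b" "label j = c" using block_meets_label_class assms(2) by blast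
    moreover have "j \<in> grid" "i \<noteq> j" using b \<open>j \<in> b\<close> \<open>label j = c\<close> assms(3) block_subset_card by auto
    ultimately show "b \<in> (\<lambda>j. {i, j, third i j}) ` {j \<in> grid. label j = c}"
      using block_determined_by_two_points b by blast
  qed
qed

lemma card_blocks_through:
  assumes "i \<in> grid" shows "card {b \<in> blocks. i \<in> b} = 9"
proof -
  define c where "c = (label i + 1) mod 3"
  have c: "c < 3" "c \<noteq> label i" using label_less_3[of i] unfolding c_def by presburger+
  have "card {j \<in> grid. label j = c} = card {b \<in> blocks. i \<in> b}"
    using bij_betw_label_class_blocks_through[OF assms c] by (rule bij_betw_same_card)
  thus ?thesis using card_label_class[OF c(1)] by simp
qed

lemma card_blocks: "card blocks = 81"
proof -
  have "(\<Sum>i\<in>grid. card {b \<in> blocks. i \<in> b}) = 3 * card blocks"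
  proof (rule sum_multicount[OF finite_grid finite_blocks], rule ballI)
    fix b assume "b \<in> blocks"
    hence "{i \<in> grid. i \<in> b} = b" "card b = 3" using block_subset_card by auto
    thus "card {i \<in> grid. i \<in> b} = 3" by simp
  qed
  moreover have "(\<Sum>i\<in>grid. card {b \<in> blocks. i \<in> b}) = 27 * 9"
    using card_blocks_through card_grid by simp
  ultimately show ?thesis by simp
qed

lemma disjoint_block_exists:
  assumes "b \<in> blocks" shows "\<exists>b'\<in>blocks. b \<inter> b' = {}"
proof (rule ccontr)
  define meeting where "meeting = (\<Union>i\<in>b. {b' \<in> blocks. i \<in> b'})"
  assume "\<not> (\<exists>b'\<in>blocks. b \<inter> b' = {})"
  hence "blocks = meeting" unfolding meeting_def by blast
  have "b \<subseteq> grid" "card b = 3" using block_subset_card[OF assms] by auto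
  hence "finite b" by (simp add: card_ge_0_finite)
  have "card meeting \<le> (\<Sum>i\<in>b. card {b' \<in> blocks. i \<in> b'})"
    unfolding meeting_def using \<open>finite b\<close> by (rule card_UN_le)
  also have "\<dots> = (\<Sum>i\<in>b. 9)"
  proof (rule sum.cong)
    fix i assume "i \<in> b"
    thus "card {b' \<in> blocks. i \<in> b'} = 9" using \<open>b \<subseteq> grid\<close> card_blocks_through by blast
  qed simp
  also have "\<dots> = 27" using \<open>card b = 3\<close> by simp
  finally show False using card_blocks \<open>blocks = meeting\<close> by simp
qed

section \<open>Lines in the projective plane\<close>

fun dot3 :: "cvec \<Rightarrow> cvec \<Rightarrow> complex" where
  "dot3 (a, b, c) (x, y, z) = a * x + b * y + c * z"

fun cross3 :: "cvec \<Rightarrow> cvec \<Rightarrow> cvec" where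
  "cross3 (a, b, c) (d, e, f) = (b * f - c * e, c * d - a * f, a * e - b * d)"

lemma dot3_cross3: "dot3 (cross3 u v) w = det3 u v w"
  by (cases u; cases v; cases w) (simp add: algebra_simps)

lemma dot3_scale3_right: "dot3 l (scale3 k v) = k * dot3 l v"
  by (cases l; cases v) (simp add: algebra_simps)

lemma dot3_scale3_left: "dot3 (scale3 k l) v = k * dot3 l v"
  by (cases l; cases v) (simp add: algebra_simps)

lemma cross3_scale3_self: "cross3 v (scale3 k v) = (0, 0, 0)"
  by (cases v) (simp add: algebra_simps)

lemma det3_repeat: "det3 u v u = 0" "det3 u v v = 0"
  by (cases u; cases v; simp add: algebra_simps)+

lemma pline_dot3: "pline l = {ray v | v. v \<noteq> (0, 0, 0) \<and> dot3 l v = 0}"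
  by (cases l) (auto simp: pline_def)

lemma ray_in_pline_iff: "v \<noteq> (0, 0, 0) \<Longrightarrow> ray v \<in> pline l \<longleftrightarrow> dot3 l v = 0"
proof -
  assume "v \<noteq> (0, 0, 0)"
  moreover have "dot3 l v = 0" if "ray v = ray w" "dot3 l w = 0" for w
    using ray_eq_imp_scale3[OF that(1)[symmetric]] that(2) by (auto simp: dot3_scale3_right)
  ultimately show ?thesis unfolding pline_dot3 by blast
qed

lemma pline_scale3: "k \<noteq> 0 \<Longrightarrow> pline (scale3 k l) = pline l"
  by (simp add: pline_dot3 dot3_scale3_left)

lemma cross3_normal_cross3:
  assumes "dot3 l u = 0" "dot3 l v = 0"
  shows "cross3 l (cross3 u v) = (0, 0, 0)"
proof -
  obtain a b c x y z p q r where "l = (a, b, c)" "u = (x, y, z)" "v = (p, q, r)"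
    by (cases l, cases u, cases v)
  moreover have "b * (x * q - y * p) - c * (z * p - x * r) = x * (a*p + b*q + c*r) - p * (a*x + b*y + c*z)"
    "c * (y * r - z * q) - a * (x * q - y * p) = y * (a*p + b*q + c*r) - q * (a*x + b*y + c*z)"
    "a * (z * p - x * r) - b * (y * r - z * q) = z * (a*p + b*q + c*r) - r * (a*x + b*y + c*z)"
    by algebra+
  ultimately show ?thesis using assms by simp
qed

lemma cross3_eq_0_imp_parallel:
  assumes "cross3 l m = (0, 0, 0)" "m \<noteq> (0, 0, 0)"
  shows "\<exists>k. l = scale3 k m"
proof -
  obtain a b c x y z where l: "l = (a, b, c)" and m: "m = (x, y, z)" by (cases l, cases m)
  have e: "b * z = c * y" "c * x = a * z" "a * y = b * x" using assms(1) by (simp_all add: l m)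
  consider "x \<noteq> 0" | "y \<noteq> 0" | "z \<noteq> 0" using assms(2) m by auto
  hence "l = scale3 (a / x) m \<or> l = scale3 (b / y) m \<or> l = scale3 (c / z) m"
    by cases (use e in \<open>simp_all add: l m field_simps\<close>)
  thus ?thesis by blast
qed

lemma normal_eq_scale3_cross3:
  assumes "l \<noteq> (0, 0, 0)" "dot3 l u = 0" "dot3 l v = 0" "cross3 u v \<noteq> (0, 0, 0)"
  shows "\<exists>k. k \<noteq> 0 \<and> l = scale3 k (cross3 u v)"
proof -
  obtain k where k: "l = scale3 k (cross3 u v)"
    using cross3_eq_0_imp_parallel[OF cross3_normal_cross3[OF assms(2,3)] assms(4)] by blast
  hence "k \<noteq> 0" using assms(1) by (cases "cross3 u v") auto
  thus ?thesis using k by blast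
qed

lemma det3_eq_0_if_common_normal:
  assumes "l \<noteq> (0, 0, 0)" "dot3 l u = 0" "dot3 l v = 0" "dot3 l w = 0"
  shows "det3 u v w = 0"
proof (cases "cross3 u v = (0, 0, 0)")
  case True
  hence "dot3 (cross3 u v) w = 0" by (cases w) simp
  thus ?thesis by (simp add: dot3_cross3)
next
  case False
  then obtain k where "k \<noteq> 0" "l = scale3 k (cross3 u v)"
    using normal_eq_scale3_cross3 assms(1-3) by blast
  thus ?thesis using assms(4) by (simp add: dot3_scale3_left dot3_cross3)
qed

section \<open>Lines through sextactic points\<close>

lemma cross3_sext_vec_nonzero:
  assumes "i \<in> grid" "j \<in> grid" "i \<noteq> j"
  shows "cross3 (sext_vec i) (sext_vec j) \<noteq> (0, 0, 0)"
proof
  assume cross0: "cross3 (sext_vec i) (sext_vec j) = (0, 0, 0)"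
  have "aligned i j k" if "k \<in> grid - {i, j}" for k
  proof -
    have "det3 (sext_vec i) (sext_vec j) (sext_vec k) = dot3 (0, 0, 0) (sext_vec k)"
      using cross0 by (simp flip: dot3_cross3)
    also have "\<dots> = 0" by (cases "sext_vec k") simp
    finally have "det3 (sext_vec i) (sext_vec j) (sext_vec k) = 0" .
    thus ?thesis using det3_sext_vec_eq_0_iff[of i j k] assms that by force
  qed
  moreover have "card (grid - {i, j}) = 25"
    using assms card_grid by (simp add: card_Diff_subset finite_grid)
  moreover from this obtain k where k: "k \<in> grid - {i, j}" by (metis all_not_in_conv card.empty zero_neq_numeral)
  ultimately have "grid - {i, j} \<subseteq> {k}" using aligned_unique by blast
  hence "card (grid - {i, j}) \<le> 1" using card_mono[of "{k}"] by simp
  thus False using \<open>card (grid - {i, j}) = 25\<close> by simp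
qed

lemma inj_on_sext_point: "inj_on sext_point grid"
proof
  fix i j assume "i \<in> grid" "j \<in> grid" "sext_point i = sext_point j"
  then obtain k where "sext_vec j = scale3 k (sext_vec i)" using ray_eq_imp_scale3 by blast
  hence "cross3 (sext_vec i) (sext_vec j) = (0, 0, 0)" by (simp add: cross3_scale3_self)
  thus "i = j" using cross3_sext_vec_nonzero \<open>i \<in> grid\<close> \<open>j \<in> grid\<close> by blast
qed

definition indices_on :: "cvec set set \<Rightarrow> idx set" where
  "indices_on L = {i \<in> grid. sext_point i \<in> L}"

lemma inter_sextactic_pts: "L \<inter> sextactic_pts = sext_point ` indices_on L"
  unfolding sextactic_pts_eq indices_on_def by blast

lemma card_inter_sextactic_pts: "card (L \<inter> sextactic_pts) = card (indices_on L)"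
  unfolding inter_sextactic_pts
  by (rule card_image, rule inj_on_subset[OF inj_on_sext_point]) (simp add: indices_on_def)

lemma indices_on_pline: "indices_on (pline l) = {i \<in> grid. dot3 l (sext_vec i) = 0}"
  by (simp add: indices_on_def ray_in_pline_iff sext_vec_nonzero)

lemma pline_through_two_sext_points:
  assumes "l \<noteq> (0, 0, 0)" "i \<in> indices_on (pline l)" "j \<in> indices_on (pline l)" "i \<noteq> j"
  shows "pline l = pline (cross3 (sext_vec i) (sext_vec j))"
proof -
  have "i \<in> grid" "j \<in> grid" "dot3 l (sext_vec i) = 0" "dot3 l (sext_vec j) = 0"
    using assms(2,3) by (auto simp: indices_on_pline)
  then obtain k where "k \<noteq> 0" "l = scale3 k (cross3 (sext_vec i) (sext_vec j))"
    using normal_eq_scale3_cross3 assms(1,4) cross3_sext_vec_nonzero by blast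
  thus ?thesis by (simp add: pline_scale3)
qed

lemma indices_on_pline_aligned:
  assumes "l \<noteq> (0, 0, 0)" "{i, j, k} \<subseteq> indices_on (pline l)" "distinct [i, j, k]"
  shows "aligned i j k"
proof -
  have "i \<in> grid" "j \<in> grid" "k \<in> grid"
    "dot3 l (sext_vec i) = 0" "dot3 l (sext_vec j) = 0" "dot3 l (sext_vec k) = 0"
    using assms(2) by (auto simp: indices_on_pline)
  thus ?thesis
    using det3_eq_0_if_common_normal[OF assms(1)] det3_sext_vec_eq_0_iff assms(3) by blast
qed

lemma indices_on_block_line:
  assumes "i \<in> grid" "j \<in> grid" "k \<in> grid" "aligned i j k"
  shows "indices_on (pline (cross3 (sext_vec i) (sext_vec j))) = {i, j, k}"
proof -
  have "m \<in> {i, j, k} \<longleftrightarrow> det3 (sext_vec i) (sext_vec j) (sext_vec m) = 0" if "m \<in> grid" for m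
  proof (cases "m \<in> {i, j}")
    case True thus ?thesis by (auto simp: det3_repeat)
  next
    case False
    hence "det3 (sext_vec i) (sext_vec j) (sext_vec m) = 0 \<longleftrightarrow> aligned i j m"
      using det3_sext_vec_eq_0_iff[of i j m] aligned_distinct[OF assms(4)] assms that by auto
    also have "\<dots> \<longleftrightarrow> m = k" using aligned_unique assms that by blast
    finally show ?thesis using False by auto
  qed
  thus ?thesis using assms by (auto simp: indices_on_pline dot3_cross3)
qed

lemma obtain_three_distinct:
  assumes "3 \<le> card A" obtains i j k where "{i, j, k} \<subseteq> A" "distinct [i, j, k]"
proof -
  obtain B where "B \<subseteq> A" "card B = 3" using obtain_subset_with_card_n[OF assms] by blast
  then obtain i j k where "B = {i, j, k}" "distinct [i, j, k]" by (auto simp: card_3_iff)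
  thus ?thesis using that \<open>B \<subseteq> A\<close> by blast
qed

lemma indices_on_in_blocks:
  assumes "L \<in> plines" "3 \<le> card (indices_on L)"
  shows "indices_on L \<in> blocks"
proof -
  obtain l where l: "l \<noteq> (0, 0, 0)" "L = pline l" using assms(1) unfolding plines_def by blast
  obtain i j k where ijk: "{i, j, k} \<subseteq> indices_on L" "distinct [i, j, k]"
    using obtain_three_distinct[OF assms(2)] .
  have "i \<in> grid" "j \<in> grid" "k \<in> grid" using ijk(1) by (auto simp: indices_on_def)
  moreover have "aligned i j k" using indices_on_pline_aligned l ijk by blast
  moreover have "L = pline (cross3 (sext_vec i) (sext_vec j))"
    using pline_through_two_sext_points l ijk by auto
  ultimately show ?thesis using indices_on_block_line aligned_in_blocks by metis
qed

lemma block_line_exists: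
  assumes "b \<in> blocks" shows "\<exists>L\<in>plines. indices_on L = b"
proof -
  obtain i j k where b: "b = {i, j, k}" "i \<in> grid" "j \<in> grid" "k \<in> grid" "aligned i j k"
    using assms unfolding blocks_def by blast
  have "cross3 (sext_vec i) (sext_vec j) \<noteq> (0, 0, 0)"
    using cross3_sext_vec_nonzero aligned_distinct[OF b(5)] b by simp
  thus ?thesis using indices_on_block_line b unfolding plines_def by blast
qed

lemma plines_eq_if_two_common:
  assumes "L \<in> plines" "L' \<in> plines" "{i, j} \<subseteq> indices_on L \<inter> indices_on L'" "i \<noteq> j"
  shows "L = L'"
proof -
  obtain l l' where l: "l \<noteq> (0, 0, 0)" "L = pline l" and l': "l' \<noteq> (0, 0, 0)" "L' = pline l'"
    using assms(1,2) unfolding plines_def by blast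
  have "L = pline (cross3 (sext_vec i) (sext_vec j))"
    using pline_through_two_sext_points[OF l(1)] assms(3,4) l(2) by simp
  moreover have "L' = pline (cross3 (sext_vec i) (sext_vec j))"
    using pline_through_two_sext_points[OF l'(1)] assms(3,4) l'(2) by simp
  ultimately show ?thesis by simp
qed

lemma card_indices_on_le_3:
  assumes "L \<in> plines" shows "card (indices_on L) \<le> 3"
proof (rule ccontr)
  assume "\<not> card (indices_on L) \<le> 3"
  hence "indices_on L \<in> blocks" using indices_on_in_blocks assms by simp
  thus False using block_subset_card \<open>\<not> card (indices_on L) \<le> 3\<close> by simp
qed

lemma rich_lines_indices_on: "rich_lines = {L \<in> plines. 3 \<le> card (indices_on L)}"
  by (simp add: rich_lines_def card_inter_sextactic_pts)

lemma bij_betw_rich_lines_blocks: "bij_betw indices_on rich_lines blocks"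
proof (rule bij_betw_imageI)
  show "inj_on indices_on rich_lines"
  proof (rule inj_onI)
    fix L L' assume L: "L \<in> rich_lines" "L' \<in> rich_lines" "indices_on L = indices_on L'"
    then obtain i j k where "{i, j, k} \<subseteq> indices_on L" "distinct [i, j, k]"
      using obtain_three_distinct unfolding rich_lines_indices_on by blast
    hence "{i, j} \<subseteq> indices_on L \<inter> indices_on L'" "i \<noteq> j" using L(3) by auto
    thus "L = L'" using plines_eq_if_two_common L(1,2) unfolding rich_lines_def by blast
  qed
  show "indices_on ` rich_lines = blocks"
  proof (intro equalityI subsetI)
    fix b assume "b \<in> indices_on ` rich_lines"
    thus "b \<in> blocks" using indices_on_in_blocks unfolding rich_lines_indices_on by blast
  next
    fix b assume "b \<in> blocks"
    then obtain L where "L \<in> plines" "indices_on L = b" using block_line_exists by blast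
    moreover have "card b = 3" using block_subset_card \<open>b \<in> blocks\<close> by blast
    ultimately show "b \<in> indices_on ` rich_lines" unfolding rich_lines_indices_on by force
  qed
qed

lemma card_rich_lines: "card rich_lines = 81"
  using bij_betw_same_card[OF bij_betw_rich_lines_blocks] card_blocks by simp

lemma card_rich_line_sextactic_pts: "L \<in> rich_lines \<Longrightarrow> card (L \<inter> sextactic_pts) = 3"
  using bij_betw_apply[OF bij_betw_rich_lines_blocks] block_subset_card
  by (simp add: card_inter_sextactic_pts)

lemma card_rich_lines_through:
  assumes "p \<in> sextactic_pts" shows "card {L \<in> rich_lines. p \<in> L} = 9"
proof -
  obtain i where i: "i \<in> grid" "p = sext_point i" using assms sextactic_pts_eq by blast
  have "{L \<in> rich_lines. p \<in> L} = {L \<in> rich_lines. i \<in> indices_on L}"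
    using i by (auto simp: indices_on_def)
  moreover have "bij_betw indices_on {L \<in> rich_lines. i \<in> indices_on L} {b \<in> blocks. i \<in> b}"
  proof (rule bij_betw_subset[OF bij_betw_rich_lines_blocks])
    show "indices_on ` {L \<in> rich_lines. i \<in> indices_on L} = {b \<in> blocks. i \<in> b}"
      using bij_betw_imp_surj_on[OF bij_betw_rich_lines_blocks] by blast
  qed blast
  ultimately have "card {L \<in> rich_lines. p \<in> L} = card {b \<in> blocks. i \<in> b}"
    by (simp add: bij_betw_same_card)
  thus ?thesis using card_blocks_through i(1) by simp
qed

lemma indices_on_Un: "indices_on (L \<union> L') = indices_on L \<union> indices_on L'"
  by (auto simp: indices_on_def)

lemma rich_lines_conic_components:
  "rich_lines = {L \<in> plines. \<exists>L' \<in> plines. card ((L \<union> L') \<inter> sextactic_pts) \<ge> 6}"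
proof (intro equalityI subsetI)
  fix L assume L: "L \<in> rich_lines"
  have b: "indices_on L \<in> blocks" by (rule bij_betw_apply[OF bij_betw_rich_lines_blocks L])
  then obtain b' where b': "b' \<in> blocks" "indices_on L \<inter> b' = {}"
    using disjoint_block_exists by blast
  then obtain L' where "L' \<in> plines" "indices_on L' = b'" using block_line_exists by blast
  moreover have "card (indices_on L) = 3" "card b' = 3" using block_subset_card b b'(1) by auto
  ultimately have "card ((L \<union> L') \<inter> sextactic_pts) = 6"
    using b'(2) by (simp add: card_inter_sextactic_pts indices_on_Un card_Un_disjoint card_ge_0_finite)
  thus "L \<in> {L \<in> plines. \<exists>L' \<in> plines. card ((L \<union> L') \<inter> sextactic_pts) \<ge> 6}"
    using L \<open>L' \<in> plines\<close> unfolding rich_lines_def by (auto intro: bexI[where x = L'])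
next
  fix L assume "L \<in> {L \<in> plines. \<exists>L' \<in> plines. card ((L \<union> L') \<inter> sextactic_pts) \<ge> 6}"
  then obtain L' where L: "L \<in> plines" "L' \<in> plines" "6 \<le> card (indices_on L \<union> indices_on L')"
    by (auto simp: card_inter_sextactic_pts indices_on_Un)
  moreover have "card (indices_on L \<union> indices_on L') \<le> card (indices_on L) + card (indices_on L')"
    by (rule card_Un_le)
  ultimately have "3 \<le> card (indices_on L)" using card_indices_on_le_3[OF L(2)] by linarith
  thus "L \<in> rich_lines" using L(1) unfolding rich_lines_indices_on by simp
qed

theorem mainTheorem8:
  shows "rich_lines = {L \<in> plines. \<exists>L' \<in> plines. card ((L \<union> L') \<inter> sextactic_pts) \<ge> 6}
    \<and> card rich_lines = 81
    \<and> (\<forall>L \<in> rich_lines. card (L \<inter> sextactic_pts) = 3)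
    \<and> (\<forall>p \<in> sextactic_pts. card {L \<in> rich_lines. p \<in> L} = 9)"
proof (intro conjI ballI)
  show "rich_lines = {L \<in> plines. \<exists>L' \<in> plines. card ((L \<union> L') \<inter> sextactic_pts) \<ge> 6}"
    by (fact rich_lines_conic_components)
  show "card rich_lines = 81" by (fact card_rich_lines)
next
  fix L assume "L \<in> rich_lines"
  thus "card (L \<inter> sextactic_pts) = 3" by (rule card_rich_line_sextactic_pts)
next
  fix p assume "p \<in> sextactic_pts"
  thus "card {L \<in> rich_lines. p \<in> L} = 9" by (rule card_rich_lines_through)
qed

end
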